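(* Let $N\ge K$ be positive integers and let $F,G\in\mathbb C^{N\times K}$ with $\mathrm{rank}(F)=K$. Then the map $h_{0,F,G}:\mathcal H_K^+\to\mathcal H_K^+$ defined in the context is non-decreasing for the Loewner order: if $Z\le Z'$ in $\mathcal H_K^+$ then $h_{0,F,G}(Z)\le h_{0,F,G}(Z')$.
   Context: $\mathcal H_K^+$ is the cone of $K\times K$ Hermitian positive semidefinite matrices, ordered by $A\le B$ iff $B-A\in\mathcal H_K^+$. $\Pi_F^\perp:=I-F(F^*F)^{-1}F^*$. For $Z\in\mathcal H_K^+$ with positive semidefinite square root $Z^{1/2}$, $$h_{0,F,G}(Z):=G^*F(F^*F)^{-1}Z^{1/2}\big(I+Z^{1/2}(F^*F)^{-1}Z^{1/2}\big)^{-1}Z^{1/2}(F^*F)^{-1}F^*G+G^*\Pi_F^\perp G.$$ For invertible $Z$ this equals $G^*(I+FZ^{-1}F^* )^{-1}G$. *)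

theory Defs
  imports "HOL-Analysis.Analysis"
begin

text \<open>Complex matrices are modelled as complex^'c^'r (rows indexed by 'r, columns by 'c).\<close>

definition cadjoint :: "complex^'c^'r \<Rightarrow> complex^'r^'c" where
  "cadjoint A = (\<chi> i j. cnj (A $ j $ i))"

definition hermitian :: "complex^'n^'n \<Rightarrow> bool" where
  "hermitian A \<longleftrightarrow> cadjoint A = A"

definition psd :: "complex^'n^'n \<Rightarrow> bool" where
  "psd A \<longleftrightarrow> hermitian A \<and> (\<forall>x::complex^'n. 0 \<le> Re (\<Sum>i\<in>UNIV. cnj (x $ i) * (A *v x) $ i))"

definition loewner_le :: "complex^'n^'n \<Rightarrow> complex^'n^'n \<Rightarrow> bool" where
  "loewner_le A B \<longleftrightarrow> psd (B - A)"

definition psd_sqrt :: "complex^'n^'n \<Rightarrow> complex^'n^'n" where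
  "psd_sqrt Z = (THE R. psd R \<and> R ** R = Z)"

definition proj_perp :: "complex^'k^'n \<Rightarrow> complex^'n^'n" where
  "proj_perp F = mat 1 - F ** matrix_inv (cadjoint F ** F) ** cadjoint F"

definition h0 :: "complex^'k^'n \<Rightarrow> complex^'k^'n \<Rightarrow> complex^'k^'k \<Rightarrow> complex^'k^'k" where
  "h0 F G Z =
     (let W = matrix_inv (cadjoint F ** F); S = psd_sqrt Z in
      cadjoint G ** F ** W ** S ** matrix_inv (mat 1 + S ** W ** S) ** S ** W ** cadjoint F ** G
      + cadjoint G ** proj_perp F ** G)"

end

theory Submission
  imports Defs
begin

text \<open>
  With \<open>M = F\<^sup>* F\<close>, \<open>W = M\<^sup>-\<^sup>1\<close> and \<open>S\<close> the positive square root of \<open>Z\<close>,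
  the push-through identity \<open>(M + S S) W S = S (1 + S W S)\<close> gives
  \<open>W S (1 + S W S)\<^sup>-\<^sup>1 S W = W - (M + Z)\<^sup>-\<^sup>1\<close>, so that
  \<open>h0 F G Z = (F\<^sup>* G)\<^sup>* (W - (M + Z)\<^sup>-\<^sup>1) (F\<^sup>* G) + G\<^sup>* \<Pi>\<^sup>\<bottom> G\<close> also for singular \<open>Z\<close>.
  Monotonicity follows because inversion reverses the Loewner order on positive definite
  matrices and congruence preserves it. As \<open>psd_sqrt\<close> is a definite description, the real
  work is existence and uniqueness of the positive square root, which come from the spectral
  theorem for Hermitian matrices; eigenvectors are found by maximising the Rayleigh quotient
  on the orthogonal complement of those already found.
\<close>

section \<open>The complex inner product\<close>

definition cinner :: "complex^'n \<Rightarrow> complex^'n \<Rightarrow> complex" where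
  "cinner x y = (\<Sum>i\<in>UNIV. cnj (x $ i) * y $ i)"

lemma psd_iff_cinner: "psd A \<longleftrightarrow> hermitian A \<and> (\<forall>x. 0 \<le> Re (cinner x (A *v x)))"
  by (simp add: psd_def cinner_def)

lemma cinner_add_right: "cinner x (y + z) = cinner x y + cinner x z"
  by (simp add: cinner_def distrib_left sum.distrib)

lemma cinner_diff_right: "cinner x (y - z) = cinner x y - cinner x z"
  by (simp add: cinner_def right_diff_distrib sum_subtractf)

lemma cinner_diff_left: "cinner (x - y) z = cinner x z - cinner y z"
  by (simp add: cinner_def left_diff_distrib sum_subtractf)

lemma cinner_scale_right: "cinner x (c *s y) = c * cinner x y"
  by (simp add: cinner_def sum_distrib_left mult_ac)

lemma cinner_scale_left: "cinner (c *s x) y = cnj c * cinner x y"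
  by (simp add: cinner_def sum_distrib_left mult_ac)

lemma cinner_scaleR_right: "cinner x (c *\<^sub>R y) = of_real c * cinner x y"
  unfolding cinner_def vector_scaleR_component
  by (simp add: sum_distrib_left scaleR_conv_of_real mult_ac)

lemma cinner_sum_right: "finite S \<Longrightarrow> cinner x (sum f S) = (\<Sum>v\<in>S. cinner x (f v))"
  by (simp add: cinner_def sum_distrib_left sum.swap[of _ UNIV S])

lemma cinner_zero_right [simp]: "cinner x 0 = 0"
  by (simp add: cinner_def)

lemma cnj_cinner: "cnj (cinner x y) = cinner y x"
  by (simp add: cinner_def mult.commute)

lemma Re_cinner: "Re (cinner x y) = inner x y"
  by (simp add: cinner_def inner_vec_def inner_complex_def)

lemma Re_cinner_commute: "Re (cinner x y) = Re (cinner y x)"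
  by (simp add: Re_cinner inner_commute)

lemma cinner_self: "cinner x x = of_real ((norm x)\<^sup>2)"
  by (simp add: complex_eq_iff Re_cinner power2_norm_eq_inner) (simp add: cinner_def)

lemma cinner_self_eq_0_iff [simp]: "cinner x x = 0 \<longleftrightarrow> x = 0"
  by (simp add: cinner_self)

lemma cinner_adjoint: "cinner x (A *v y) = cinner (cadjoint A *v x) y"
proof -
  have "cinner x (A *v y) = (\<Sum>i\<in>UNIV. \<Sum>j\<in>UNIV. cnj (x$i) * A$i$j * y$j)"
    by (simp add: cinner_def matrix_vector_mult_def sum_distrib_left mult.assoc)
  also have "\<dots> = (\<Sum>j\<in>UNIV. \<Sum>i\<in>UNIV. cnj (x$i) * A$i$j * y$j)"
    by (rule sum.swap)
  also have "\<dots> = cinner (cadjoint A *v x) y"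
    by (simp add: cinner_def matrix_vector_mult_def cadjoint_def sum_distrib_left sum_distrib_right
        mult_ac)
  finally show ?thesis .
qed

lemma cadjoint_cadjoint [simp]: "cadjoint (cadjoint A) = A"
  by (simp add: cadjoint_def vec_eq_iff)

lemma cadjoint_matrix_mult: "cadjoint (A ** B) = cadjoint B ** cadjoint A"
  by (simp add: cadjoint_def vec_eq_iff matrix_matrix_mult_def mult.commute)

lemma cadjoint_add: "cadjoint (A + B) = cadjoint A + cadjoint B"
  by (simp add: cadjoint_def vec_eq_iff)

lemma cadjoint_diff: "cadjoint (A - B) = cadjoint A - cadjoint B"
  by (simp add: cadjoint_def vec_eq_iff)

lemma cadjoint_mat_1 [simp]: "cadjoint (mat 1) = mat 1"
  by (simp add: cadjoint_def vec_eq_iff mat_def)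

lemma hermitian_cinner_swap: "hermitian A \<Longrightarrow> cinner x (A *v y) = cinner (A *v x) y"
  by (metis cinner_adjoint hermitian_def)

lemma cinner_gram: "cinner x ((cadjoint F ** F) *v x) = cinner (F *v x) (F *v x)"
  by (simp only: matrix_vector_mul_assoc[symmetric]) (subst cinner_adjoint, simp)

lemma matrix_inv_right: "invertible A \<Longrightarrow> A ** matrix_inv A = mat 1"
  unfolding invertible_def matrix_inv_def by (rule conjunct1, rule someI_ex)

lemma matrix_inv_left: "invertible A \<Longrightarrow> matrix_inv A ** A = mat 1"
  unfolding invertible_def matrix_inv_def by (rule conjunct2, rule someI_ex)

lemma matrix_inv_unique:
  fixes A B :: "'a::field^'n^'n"
  assumes "A ** B = mat 1"
  shows "matrix_inv A = B"
proof -
  have "invertible A"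
    using assms invertible_right_inverse by blast
  then have "matrix_inv A = matrix_inv A ** (A ** B)"
    using assms by simp
  also have "\<dots> = B"
    by (simp add: matrix_mul_assoc matrix_inv_left \<open>invertible A\<close>)
  finally show ?thesis .
qed

lemma cadjoint_matrix_inv:
  fixes A :: "complex^'n^'n"
  assumes "invertible A"
  shows "cadjoint (matrix_inv A) = matrix_inv (cadjoint A)"
proof -
  have "cadjoint A ** cadjoint (matrix_inv A) = mat 1"
    by (metis cadjoint_matrix_mult cadjoint_mat_1 matrix_inv_left assms)
  then show ?thesis
    by (rule matrix_inv_unique[symmetric])
qed

lemma matrix_diff_ldistrib: "(C :: 'a::ring_1^_^_) ** (A - B) = C ** A - C ** B"
  by (vector matrix_matrix_mult_def sum_subtractf[symmetric] field_simps)

lemma matrix_diff_rdistrib: "(A - B) ** (C :: 'a::ring_1^_^_) = A ** C - B ** C"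
  by (vector matrix_matrix_mult_def sum_subtractf[symmetric] field_simps)

lemma matrix_add_rdistrib: "(A + B) ** (C :: 'a::semiring_1^_^_) = A ** C + B ** C"
  by (vector matrix_matrix_mult_def sum.distrib[symmetric] field_simps)

lemma matrix_vector_mult_scale: "(A::'a::comm_semiring_1^'n^'m) *v (c *s x) = c *s (A *v x)"
  by (simp add: vec_eq_iff matrix_vector_mult_def sum_distrib_left mult_ac)

lemma matrix_vector_mult_complex_scaleR: "(A::complex^'n^'m) *v (c *\<^sub>R x) = c *\<^sub>R (A *v x)"
  using linear_cmul[OF matrix_vector_mul_linear] by blast

lemma of_real_scale_eq_scaleR: "of_real c *s (x::complex^'n) = c *\<^sub>R x"
  unfolding vec_eq_iff vector_scaleR_component by (simp add: scaleR_conv_of_real)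

section \<open>Positive definite matrices and the Loewner order\<close>

definition pd :: "complex^'n^'n \<Rightarrow> bool" where
  "pd A \<longleftrightarrow> hermitian A \<and> (\<forall>x. x \<noteq> 0 \<longrightarrow> 0 < Re (cinner x (A *v x)))"

lemma pd_imp_psd:
  assumes "pd A"
  shows "psd A"
proof -
  have "0 \<le> Re (cinner x (A *v x))" for x
    using assms unfolding pd_def by (cases "x = 0") (auto intro: less_imp_le)
  then show ?thesis
    using assms by (simp add: pd_def psd_iff_cinner)
qed

lemma pd_imp_invertible:
  assumes "pd A"
  shows "invertible A"
proof -
  have "A *v x = 0 \<Longrightarrow> x = 0" for x
    using assms unfolding pd_def by (metis cinner_zero_right less_irrefl zero_complex.sel(1))
  then show ?thesis
    using invertible_left_inverse matrix_left_invertible_ker by blast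
qed

lemma pd_mat_1: "pd (mat 1)"
  by (simp add: pd_def hermitian_def cinner_self)

lemma pd_add_psd: "pd A \<Longrightarrow> psd B \<Longrightarrow> pd (A + B)"
  unfolding pd_def psd_iff_cinner hermitian_def
  by (auto simp: cadjoint_add matrix_vector_mult_add_rdistrib cinner_add_right add_pos_nonneg)

lemma psd_congruence:
  fixes C :: "complex^'m^'n"
  assumes "psd A"
  shows "psd (cadjoint C ** A ** C)"
proof -
  have form: "cinner x ((cadjoint C ** A ** C) *v x) = cinner (C *v x) (A *v (C *v x))" for x
    by (simp only: matrix_vector_mul_assoc[symmetric]) (subst cinner_adjoint, simp)
  have "0 \<le> Re (cinner x ((cadjoint C ** A ** C) *v x))" for x
    using assms unfolding form psd_iff_cinner by blast
  moreover have "hermitian (cadjoint C ** A ** C)"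
    using assms by (simp add: psd_iff_cinner hermitian_def cadjoint_matrix_mult matrix_mul_assoc)
  ultimately show ?thesis
    using psd_iff_cinner by blast
qed

lemma loewner_le_add_right: "loewner_le A B \<Longrightarrow> loewner_le (A + C) (B + C)"
  by (simp add: loewner_le_def)

lemma loewner_le_congruence:
  assumes "loewner_le A B"
  shows "loewner_le (cadjoint C ** A ** C) (cadjoint C ** B ** C)"
proof -
  have "cadjoint C ** B ** C - cadjoint C ** A ** C = cadjoint C ** (B - A) ** C"
    by (simp add: matrix_diff_ldistrib matrix_diff_rdistrib)
  then show ?thesis
    using assms psd_congruence by (simp add: loewner_le_def)
qed

lemma pd_gram:
  fixes F :: "complex^'k^'n"
  assumes "\<And>x. F *v x = 0 \<Longrightarrow> x = 0"
  shows "pd (cadjoint F ** F)"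
  using assms unfolding pd_def hermitian_def
  by (auto simp: cadjoint_matrix_mult cinner_gram cinner_self)

lemma full_column_rank_imp_injective:
  fixes F :: "complex^'k^'n"
  assumes "rank F = CARD('k)" and "F *v x = 0"
  shows "x = 0"
proof -
  have "vec.span (rows F) = UNIV"
    using assms(1) vec.dim_eq_full[of "rows F"]
    by (simp add: row_rank_def_gen vec.dimension_def card_cart_basis)
  then show ?thesis
    using matrix_left_invertible_span_rows_gen matrix_left_invertible_ker assms(2) by blast
qed

lemma pd_matrix_inv:
  assumes "pd A"
  shows "pd (matrix_inv A)"
proof -
  have inv: "invertible A" and herm: "hermitian A"
    using assms pd_imp_invertible pd_def by auto
  have "0 < Re (cinner y (matrix_inv A *v y))" if "y \<noteq> 0" for y
  proof -
    define u where "u = matrix_inv A *v y"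
    have Au: "A *v u = y"
      by (simp add: u_def matrix_vector_mul_assoc matrix_inv_right[OF inv])
    then have "u \<noteq> 0"
      using that by auto
    then have "0 < Re (cinner u (A *v u))"
      using assms pd_def by blast
    then show ?thesis
      using hermitian_cinner_swap[OF herm, of u u] by (metis Au u_def)
  qed
  then show ?thesis
    using herm inv by (simp add: pd_def hermitian_def cadjoint_matrix_inv)
qed

lemma matrix_inv_antitone:
  assumes A: "pd A" and AB: "loewner_le A B"
  shows "loewner_le (matrix_inv B) (matrix_inv A)"
proof -
  have B: "pd B"
    using pd_add_psd[OF A AB[unfolded loewner_le_def]] by simp
  have invA: "invertible A" and invB: "invertible B" and hA: "hermitian A" and hB: "hermitian B"
    using A B pd_imp_invertible pd_def by auto
  have herm: "hermitian (matrix_inv A - matrix_inv B)"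
    using hA hB invA invB by (simp add: hermitian_def cadjoint_diff cadjoint_matrix_inv)
  have "0 \<le> Re (cinner x ((matrix_inv A - matrix_inv B) *v x))" for x
  proof -
    define y where "y = matrix_inv B *v x"
    define z where "z = matrix_inv A *v x"
    have By: "B *v y = x" and Az: "A *v z = x"
      by (simp_all add: y_def z_def matrix_vector_mul_assoc matrix_inv_right invA invB)
    have "(matrix_inv A - matrix_inv B) *v x = z - y"
      by (simp add: y_def z_def matrix_vector_mult_diff_rdistrib)
    moreover have "cinner z (A *v y) = cinner x y"
      using hermitian_cinner_swap[OF hA] Az by metis
    ultimately have "Re (cinner x ((matrix_inv A - matrix_inv B) *v x))
        = Re (cinner (y - z) (A *v (y - z))) + Re (cinner y ((B - A) *v y))"
      by (simp add: matrix_vector_mult_diff_distrib matrix_vector_mult_diff_rdistrib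
          cinner_diff_left cinner_diff_right Re_cinner_commute[of x] Az By)
    moreover have "0 \<le> Re (cinner (y - z) (A *v (y - z)))"
      using A pd_imp_psd psd_iff_cinner by blast
    moreover have "0 \<le> Re (cinner y ((B - A) *v y))"
      using AB loewner_le_def psd_iff_cinner by blast
    ultimately show ?thesis
      by linarith
  qed
  then show ?thesis
    using herm by (simp add: loewner_le_def psd_iff_cinner)
qed

section \<open>Spectral theorem and the positive square root\<close>

lemma nonpos_if_quadratic_perturbation_nonpos:
  fixes a c :: real
  assumes "\<And>t. 0 < t \<Longrightarrow> 2 * t * a + t\<^sup>2 * c \<le> 0"
  shows "a \<le> 0"
proof (rule field_le_epsilon)
  fix e :: real
  assume "0 < e"
  define t where "t = e / (\<bar>c\<bar> + 1)"
  have t: "0 < t" "t * \<bar>c\<bar> \<le> e"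
    using \<open>0 < e\<close> by (auto simp: t_def field_simps)
  have "t\<^sup>2 * (- c) \<le> t\<^sup>2 * \<bar>c\<bar>"
    by (rule mult_left_mono) auto
  then have "2 * t * a \<le> t * (t * \<bar>c\<bar>)"
    using assms[OF t(1)] by (simp add: power2_eq_square mult.assoc)
  then have "2 * a \<le> t * \<bar>c\<bar>"
    using t(1) by (simp add: mult.assoc)
  then show "a \<le> 0 + e"
    using t(2) \<open>0 < e\<close> by linarith
qed

lemma rayleigh_maximizer_is_eigenvector:
  fixes Z :: "complex^'n^'n"
  assumes herm: "hermitian Z" and P: "subspace P" and inv: "\<And>y. y \<in> P \<Longrightarrow> Z *v y \<in> P"
    and u: "u \<in> P" and max: "\<And>y. y \<in> P \<Longrightarrow> inner y (Z *v y) \<le> lam * (norm y)\<^sup>2"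
    and attained: "inner u (Z *v u) = lam * (norm u)\<^sup>2"
  shows "Z *v u = lam *\<^sub>R u"
proof -
  define d where "d = Z *v u - lam *\<^sub>R u"
  have dP: "d \<in> P"
    unfolding d_def using P u inv by (simp add: subspace_diff subspace_scale)
  have sym: "inner a (Z *v b) = inner (Z *v a) b" for a b
    using hermitian_cinner_swap[OF herm] Re_cinner by metis
  \<comment> \<open>along \<open>u + t d\<close> the excess of the form over \<open>lam \<parallel>_\<parallel>\<^sup>2\<close> has slope \<open>2 \<parallel>d\<parallel>\<^sup>2\<close> at \<open>t = 0\<close>\<close>
  have "2 * t * (norm d)\<^sup>2 + t\<^sup>2 * (inner d (Z *v d) - lam * (norm d)\<^sup>2) \<le> 0" if "0 < t" for t
  proof -
    have "u + t *\<^sub>R d \<in> P"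
      using P u dP by (simp add: subspace_add subspace_scale)
    then have "inner (u + t *\<^sub>R d) (Z *v (u + t *\<^sub>R d)) \<le> lam * (norm (u + t *\<^sub>R d))\<^sup>2"
      by (rule max)
    moreover have "inner (u + t *\<^sub>R d) (Z *v (u + t *\<^sub>R d))
        = inner u (Z *v u) + 2 * t * inner d (Z *v u) + t\<^sup>2 * inner d (Z *v d)"
      using sym[of u d]
      by (simp add: matrix_vector_right_distrib matrix_vector_mult_complex_scaleR
          inner_commute[of "Z *v u" d] power2_eq_square algebra_simps)
    moreover have "(norm (u + t *\<^sub>R d))\<^sup>2 = (norm u)\<^sup>2 + 2 * t * inner d u + t\<^sup>2 * (norm d)\<^sup>2"
      unfolding power2_norm_eq_inner
      by (simp add: inner_add_left inner_add_right inner_commute[of u d] power2_eq_square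
          algebra_simps)
    moreover have "inner d (Z *v u) = (norm d)\<^sup>2 + lam * inner d u"
      by (simp add: d_def power2_norm_eq_inner inner_diff_right)
    ultimately show ?thesis
      using attained by (simp add: algebra_simps)
  qed
  then have "(norm d)\<^sup>2 \<le> 0"
    by (rule nonpos_if_quadratic_perturbation_nonpos)
  then show ?thesis
    by (simp add: d_def)
qed

definition corthonormal :: "(complex^'n) set \<Rightarrow> bool" where
  "corthonormal B \<longleftrightarrow> finite B \<and> (\<forall>u\<in>B. \<forall>v\<in>B. cinner u v = (if u = v then 1 else 0))"

lemma corthonormal_card_le:
  assumes "corthonormal (B :: (complex^'n) set)"
  shows "card B \<le> DIM(complex^'n)"
proof -
  have "pairwise orthogonal B"
    using assms unfolding corthonormal_def pairwise_def orthogonal_def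
    by (metis Re_cinner zero_complex.sel(1))
  moreover have "0 \<notin> B"
    using assms unfolding corthonormal_def by force
  ultimately show ?thesis
    using pairwise_orthogonal_independent independent_bound by blast
qed

lemma corthonormal_insert:
  assumes "corthonormal B" and "cinner u u = 1" and "\<forall>v\<in>B. cinner v u = 0"
  shows "corthonormal (insert u B)"
proof -
  have "cinner u v = 0" if "v \<in> B" for v
    using assms(3) that cnj_cinner[of v u] by auto
  then show ?thesis
    using assms unfolding corthonormal_def by auto
qed

lemma cinner_corthonormal_sum:
  assumes "corthonormal B" and "w \<in> B"
  shows "cinner w (\<Sum>v\<in>B. c v *s v) = c w"
proof -
  have "cinner w (\<Sum>v\<in>B. c v *s v) = (\<Sum>v\<in>B. c v * (if w = v then 1 else 0))"
    using assms by (simp add: corthonormal_def cinner_sum_right cinner_scale_right)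
  also have "\<dots> = (\<Sum>v\<in>B. if w = v then c v else 0)"
    by (rule sum.cong) auto
  also have "\<dots> = c w"
    using assms by (simp add: corthonormal_def)
  finally show ?thesis .
qed

lemma rayleigh_quotient_attains_max:
  fixes Z :: "complex^'n^'n"
  assumes P: "subspace P" and "r \<in> P" and "r \<noteq> 0"
  obtains u where "u \<in> P" "norm u = 1"
    "\<And>y. y \<in> P \<Longrightarrow> inner y (Z *v y) \<le> inner u (Z *v u) * (norm y)\<^sup>2"
proof -
  define K where "K = P \<inter> sphere 0 1"
  define f where "f y = inner y (Z *v y)" for y
  have "compact K"
    unfolding K_def using closed_subspace[OF P] by (simp add: closed_Int_compact)
  moreover have "(1 / norm r) *\<^sub>R r \<in> K"
    using assms by (simp add: K_def subspace_scale)
  moreover have "continuous_on K f"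
    unfolding f_def by (intro continuous_intros matrix_vector_mult_linear_continuous_on)
  ultimately obtain u where uK: "u \<in> K" and umax: "\<And>y. y \<in> K \<Longrightarrow> f y \<le> f u"
    using continuous_attains_sup[of K f] by blast
  have f_scale: "f (c *\<^sub>R y) = c\<^sup>2 * f y" for c y
    by (simp add: f_def matrix_vector_mult_complex_scaleR power2_eq_square)
  have "f y \<le> f u * (norm y)\<^sup>2" if "y \<in> P" for y
  proof (cases "y = 0")
    case True
    then show ?thesis by (simp add: f_def)
  next
    case False
    then have "(1 / norm y) *\<^sub>R y \<in> K"
      using that P by (simp add: K_def subspace_scale)
    then have "f ((1 / norm y) *\<^sub>R y) \<le> f u"
      by (rule umax)
    then have "f y / (norm y)\<^sup>2 \<le> f u"
      by (simp only: f_scale power_divide power_one times_divide_eq_left mult_1)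
    moreover have "0 < (norm y)\<^sup>2"
      using False by simp
    ultimately show ?thesis
      by (simp only: pos_divide_le_eq)
  qed
  then show ?thesis
    using that uK by (auto simp: K_def f_def)
qed

lemma hermitian_eigenvector_orthogonal_to_eigenvectors:
  fixes Z :: "complex^'n^'n"
  assumes herm: "hermitian Z" and eig: "\<forall>v\<in>B. \<exists>l. Z *v v = l *s v"
    and r: "r \<noteq> 0" "\<forall>v\<in>B. cinner v r = 0"
  obtains u where "cinner u u = 1" "\<forall>v\<in>B. cinner v u = 0" "\<exists>l. Z *v u = l *s u"
proof -
  define P where "P = {y. \<forall>v\<in>B. cinner v y = 0}"
  have P: "subspace P"
    by (simp add: P_def subspace_def cinner_add_right cinner_scaleR_right)
  have inv: "Z *v y \<in> P" if "y \<in> P" for y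
  proof -
    have "cinner v (Z *v y) = 0" if "v \<in> B" for v
    proof -
      obtain l where "Z *v v = l *s v"
        using eig \<open>v \<in> B\<close> by blast
      then show ?thesis
        using \<open>y \<in> P\<close> \<open>v \<in> B\<close> hermitian_cinner_swap[OF herm, of v y]
        by (simp add: P_def cinner_scale_left)
    qed
    then show ?thesis
      by (simp add: P_def)
  qed
  obtain u where u: "u \<in> P" "norm u = 1"
    and max: "\<And>y. y \<in> P \<Longrightarrow> inner y (Z *v y) \<le> inner u (Z *v u) * (norm y)\<^sup>2"
    using rayleigh_quotient_attains_max[OF P, of r Z] r by (auto simp: P_def)
  have "Z *v u = inner u (Z *v u) *\<^sub>R u"
    using rayleigh_maximizer_is_eigenvector[OF herm P inv u(1) max] u(2) by simp
  then have "Z *v u = of_real (inner u (Z *v u)) *s u"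
    by (simp add: of_real_scale_eq_scaleR)
  moreover have "cinner u u = 1"
    using u(2) by (simp add: cinner_self)
  ultimately show ?thesis
    using that u(1) by (auto simp: P_def)
qed

definition eigenbasis :: "complex^'n^'n \<Rightarrow> (complex^'n) set \<Rightarrow> bool" where
  "eigenbasis Z B \<longleftrightarrow> corthonormal B \<and> (\<forall>v\<in>B. \<exists>l. Z *v v = l *s v)"

lemma hermitian_eigenbasis_expansion:
  fixes Z :: "complex^'n^'n"
  assumes herm: "hermitian Z"
  obtains B where "eigenbasis Z B" "\<And>x. x = (\<Sum>v\<in>B. cinner v x *s v)"
proof -
  have "eigenbasis Z {}"
    by (simp add: eigenbasis_def corthonormal_def)
  moreover have "\<forall>B. eigenbasis Z B \<longrightarrow> card B < DIM(complex^'n) + 1"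
    using corthonormal_card_le[where 'n = 'n] by (auto simp: eigenbasis_def less_Suc_eq_le)
  ultimately have "\<exists>B. eigenbasis Z B \<and> (\<forall>B'. eigenbasis Z B' \<longrightarrow> card B' \<le> card B)"
    by (rule Lattices_Big.ex_has_greatest_nat)
  then obtain B where B: "eigenbasis Z B" and B_max: "\<And>B'. eigenbasis Z B' \<Longrightarrow> card B' \<le> card B"
    by blast
  have "x = (\<Sum>v\<in>B. cinner v x *s v)" for x
  proof (rule ccontr)
    define r where "r = x - (\<Sum>v\<in>B. cinner v x *s v)"
    assume "x \<noteq> (\<Sum>v\<in>B. cinner v x *s v)"
    then have "r \<noteq> 0"
      by (simp add: r_def)
    moreover have "\<forall>v\<in>B. cinner v r = 0"
      using B by (simp add: r_def eigenbasis_def cinner_diff_right cinner_corthonormal_sum)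
    ultimately obtain u where u: "cinner u u = 1" "\<forall>v\<in>B. cinner v u = 0" "\<exists>l. Z *v u = l *s u"
      using hermitian_eigenvector_orthogonal_to_eigenvectors[OF herm] B eigenbasis_def by metis
    then have "eigenbasis Z (insert u B)"
      using B corthonormal_insert by (auto simp: eigenbasis_def)
    then have "card (insert u B) \<le> card B"
      by (rule B_max)
    moreover have "u \<notin> B"
      using u by force
    ultimately show False
      using B by (simp add: eigenbasis_def corthonormal_def)
  qed
  then show ?thesis
    using B that by blast
qed

lemma matrix_eq_on_expansion_basis:
  fixes A C :: "complex^'n^'m"
  assumes "finite B" and expansion: "\<And>x. x = (\<Sum>v\<in>B. cinner v x *s v)"
    and "\<And>v. v \<in> B \<Longrightarrow> A *v v = C *v v"
  shows "A = C"
proof -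
  have expand: "M *v x = (\<Sum>v\<in>B. cinner v x *s (M *v v))" for M :: "complex^'n^'m" and x
  proof -
    have "M *v x = M *v (\<Sum>v\<in>B. cinner v x *s v)"
      by (rule arg_cong[OF expansion])
    then show ?thesis
      by (simp add: linear_sum[OF matrix_vector_mul_linear] matrix_vector_mult_scale)
  qed
  have "A *v x = C *v x" for x
    unfolding expand[of A x] expand[of C x] using assms(3) by (intro sum.cong) auto
  then show ?thesis
    by (simp add: matrix_eq)
qed

lemma psd_eigenvalue_nonneg:
  assumes "psd Z" and "v \<noteq> 0" and "Z *v v = l *s v"
  obtains c where "0 \<le> c" "l = of_real c"
proof -
  have form: "cinner v (Z *v v) = l * of_real ((norm v)\<^sup>2)"
    by (simp add: assms(3) cinner_scale_right cinner_self)
  have "cnj (cinner v (Z *v v)) = cinner v (Z *v v)"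
    using assms(1) hermitian_cinner_swap cnj_cinner psd_iff_cinner by metis
  then have "cnj l = l"
    using assms(2) by (simp add: form)
  then have "l = of_real (Re l)"
    by (simp add: complex_eq_iff)
  moreover have "0 \<le> Re (cinner v (Z *v v))"
    using assms(1) psd_iff_cinner by blast
  then have "0 \<le> Re l * (norm v)\<^sup>2"
    by (simp add: form)
  then have "0 \<le> Re l"
    using assms(2) by (simp add: zero_le_mult_iff)
  ultimately show ?thesis
    using that by blast
qed

definition spectral_sum :: "(complex^'n) set \<Rightarrow> (complex^'n \<Rightarrow> real) \<Rightarrow> complex^'n^'n" where
  "spectral_sum B c = (\<chi> i j. \<Sum>v\<in>B. of_real (c v) * v$i * cnj (v$j))"

lemma spectral_sum_mult: "spectral_sum B c *v x = (\<Sum>v\<in>B. (of_real (c v) * cinner v x) *s v)"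
proof -
  have "(spectral_sum B c *v x) $ i = (\<Sum>v\<in>B. (of_real (c v) * cinner v x) * v$i)" for i
  proof -
    have "(spectral_sum B c *v x) $ i = (\<Sum>j\<in>UNIV. \<Sum>v\<in>B. of_real (c v) * v$i * cnj (v$j) * x$j)"
      by (simp add: spectral_sum_def matrix_vector_mult_def sum_distrib_right)
    also have "\<dots> = (\<Sum>v\<in>B. \<Sum>j\<in>UNIV. of_real (c v) * v$i * cnj (v$j) * x$j)"
      by (rule sum.swap)
    also have "\<dots> = (\<Sum>v\<in>B. (of_real (c v) * cinner v x) * v$i)"
      by (simp add: cinner_def sum_distrib_left sum_distrib_right mult_ac)
    finally show ?thesis .
  qed
  then show ?thesis
    by (simp add: vec_eq_iff sum_component)
qed

lemma spectral_sum_mult_basis: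
  assumes "corthonormal B" and "w \<in> B"
  shows "spectral_sum B c *v w = of_real (c w) *s w"
proof -
  have "spectral_sum B c *v w = (\<Sum>v\<in>B. if v = w then of_real (c v) *s v else 0)"
    using assms unfolding spectral_sum_mult corthonormal_def by (intro sum.cong) auto
  then show ?thesis
    using assms by (simp add: corthonormal_def)
qed

lemma hermitian_spectral_sum: "hermitian (spectral_sum B c)"
  by (simp add: hermitian_def cadjoint_def spectral_sum_def vec_eq_iff mult_ac)

lemma psd_spectral_sum:
  assumes "finite B" and "\<And>v. v \<in> B \<Longrightarrow> 0 \<le> c v"
  shows "psd (spectral_sum B c)"
proof -
  have "Re (cinner x (spectral_sum B c *v x)) = (\<Sum>v\<in>B. c v * (cmod (cinner v x))\<^sup>2)" for x
  proof -
    have "cinner x (spectral_sum B c *v x)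
        = (\<Sum>v\<in>B. of_real (c v) * (cinner v x * cnj (cinner v x)))"
      using assms(1)
      by (simp add: spectral_sum_mult cinner_sum_right cinner_scale_right cnj_cinner mult.assoc)
    also have "\<dots> = (\<Sum>v\<in>B. of_real (c v * (cmod (cinner v x))\<^sup>2))"
      by (simp flip: complex_norm_square)
    finally show ?thesis
      by (simp only: Re_sum Re_complex_of_real)
  qed
  then have "0 \<le> Re (cinner x (spectral_sum B c *v x))" for x
    using assms(2) by (simp add: sum_nonneg)
  then show ?thesis
    using hermitian_spectral_sum psd_iff_cinner by blast
qed

lemma psd_square_eigenvector:
  assumes R: "psd R" and "0 \<le> c" and RRv: "(R ** R) *v v = of_real (c\<^sup>2) *s v"
  shows "R *v v = of_real c *s v"
proof -
  define w where "w = R *v v - of_real c *s v"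
  have Rw: "R *v w = (- of_real c) *s w"
    using RRv by (simp add: w_def matrix_vector_mult_diff_distrib matrix_vector_mult_scale
        matrix_vector_mul_assoc vector_ssub_ldistrib vector_smult_assoc power2_eq_square)
  have herm: "hermitian R"
    using R psd_iff_cinner by blast
  have "w = 0"
  proof (cases "c = 0")
    case True
    then have "cinner w w = cinner v (R *v w)"
      using hermitian_cinner_swap[OF herm, of v w] by (simp add: w_def)
    then show ?thesis
      using Rw True by simp
  next
    case False
    have "0 \<le> Re (cinner w (R *v w))"
      using R psd_iff_cinner by blast
    then have "c * (norm w)\<^sup>2 \<le> 0"
      unfolding Rw cinner_scale_right cinner_self by simp
    then show ?thesis
      using False \<open>0 \<le> c\<close> by (simp add: mult_le_0_iff)
  qed
  then show ?thesis
    by (simp add: w_def)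
qed

lemma psd_sqrt_exists_unique:
  assumes Z: "psd Z"
  shows "\<exists>!S. psd S \<and> S ** S = Z"
proof -
  obtain B where B: "eigenbasis Z B" and expansion: "\<And>x. x = (\<Sum>v\<in>B. cinner v x *s v)"
    using hermitian_eigenbasis_expansion Z psd_iff_cinner by metis
  have orth: "corthonormal B" and fin: "finite B"
    using B by (auto simp: eigenbasis_def corthonormal_def)
  have "\<exists>c. 0 \<le> c \<and> Z *v v = of_real c *s v" if "v \<in> B" for v
  proof -
    obtain l where "Z *v v = l *s v"
      using B \<open>v \<in> B\<close> eigenbasis_def by blast
    moreover have "v \<noteq> 0"
      using orth \<open>v \<in> B\<close> by (force simp: corthonormal_def)
    ultimately show ?thesis
      using psd_eigenvalue_nonneg[OF Z] by metis
  qed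
  then obtain lam where lam: "\<And>v. v \<in> B \<Longrightarrow> 0 \<le> lam v \<and> Z *v v = of_real (lam v) *s v"
    by metis
  define S where "S = spectral_sum B (\<lambda>v. sqrt (lam v))"
  have Sv: "S *v v = of_real (sqrt (lam v)) *s v" if "v \<in> B" for v
    unfolding S_def using spectral_sum_mult_basis[OF orth that] by simp
  show ?thesis
  proof (rule ex1I[of _ S], intro conjI)
    show "psd S"
      unfolding S_def using fin lam by (intro psd_spectral_sum) auto
    have "(S ** S) *v v = Z *v v" if "v \<in> B" for v
      using lam[OF that] by (simp add: Sv that matrix_vector_mult_scale vector_smult_assoc
          flip: matrix_vector_mul_assoc of_real_mult)
    with fin expansion show "S ** S = Z"
      by (rule matrix_eq_on_expansion_basis)
  next
    fix R
    assume R: "psd R \<and> R ** R = Z"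
    have "R *v v = S *v v" if "v \<in> B" for v
      using lam[OF that] R psd_square_eigenvector[of R "sqrt (lam v)" v] by (simp add: Sv that)
    with fin expansion show "R = S"
      by (rule matrix_eq_on_expansion_basis)
  qed
qed

lemma psd_psd_sqrt_and_square:
  assumes "psd Z"
  shows "psd (psd_sqrt Z) \<and> psd_sqrt Z ** psd_sqrt Z = Z"
  unfolding psd_sqrt_def using psd_sqrt_exists_unique[OF assms] by (rule theI')

section \<open>A closed form of \<open>h0\<close>\<close>

lemma woodbury_sqrt_identity:
  fixes M W S Z :: "'a::field^'k^'k"
  assumes MW: "M ** W = mat 1" and SS: "S ** S = Z"
    and invN: "invertible (M + Z)" and invT: "invertible (mat 1 + S ** W ** S)"
  shows "W ** S ** matrix_inv (mat 1 + S ** W ** S) ** S ** W = W - matrix_inv (M + Z)"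
proof -
  define T where "T = mat 1 + S ** W ** S"
  define N where "N = M + Z"
  have push_through: "N ** W ** S = S ** T"
    by (simp add: N_def T_def matrix_add_rdistrib matrix_add_ldistrib matrix_mul_assoc MW SS)
  have STT: "S ** T ** matrix_inv T = S"
    using invT by (simp add: T_def matrix_inv_right flip: matrix_mul_assoc)
  have NN: "N ** matrix_inv N = mat 1"
    using invN by (simp add: N_def matrix_inv_right)
  have "N ** (W ** S ** matrix_inv T ** S ** W) = N ** W ** S ** matrix_inv T ** S ** W"
    by (simp add: matrix_mul_assoc)
  also have "\<dots> = Z ** W"
    by (simp only: push_through STT SS)
  also have "\<dots> = N ** W - N ** matrix_inv N"
    unfolding NN by (simp add: N_def matrix_add_rdistrib MW)
  also have "\<dots> = N ** (W - matrix_inv N)"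
    by (simp add: matrix_diff_ldistrib)
  finally have "matrix_inv N ** N ** (W ** S ** matrix_inv T ** S ** W)
      = matrix_inv N ** N ** (W - matrix_inv N)"
    by (metis matrix_mul_assoc)
  then show ?thesis
    using invN by (simp add: N_def T_def matrix_inv_left)
qed

lemma h0_eq_inverse_difference:
  fixes F G :: "complex^'k^'n" and Z :: "complex^'k^'k"
  assumes F: "\<And>x. F *v x = 0 \<Longrightarrow> x = 0" and Z: "psd Z"
  shows "h0 F G Z = cadjoint (cadjoint F ** G)
      ** (matrix_inv (cadjoint F ** F) - matrix_inv (cadjoint F ** F + Z)) ** (cadjoint F ** G)
      + cadjoint G ** proj_perp F ** G"
proof -
  define M where "M = cadjoint F ** F"
  define W where "W = matrix_inv M"
  define S where "S = psd_sqrt Z"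
  have M: "pd M"
    unfolding M_def using F by (rule pd_gram)
  have MW: "M ** W = mat 1"
    unfolding W_def using M pd_imp_invertible matrix_inv_right by blast
  have S: "psd S" "S ** S = Z"
    unfolding S_def using psd_psd_sqrt_and_square[OF Z] by auto
  have "pd (mat 1 + cadjoint S ** W ** S)"
    using pd_add_psd[OF pd_mat_1 psd_congruence] pd_imp_psd pd_matrix_inv M W_def by blast
  then have invT: "invertible (mat 1 + S ** W ** S)"
    using S(1) pd_imp_invertible by (simp add: psd_iff_cinner hermitian_def)
  have invN: "invertible (M + Z)"
    using M Z pd_add_psd pd_imp_invertible by blast
  have "h0 F G Z = (cadjoint G ** F) ** (W ** S ** matrix_inv (mat 1 + S ** W ** S) ** S ** W)
      ** (cadjoint F ** G) + cadjoint G ** proj_perp F ** G"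
    by (simp add: h0_def Let_def W_def S_def M_def matrix_mul_assoc)
  also have "\<dots> = (cadjoint G ** F) ** (W - matrix_inv (M + Z)) ** (cadjoint F ** G)
      + cadjoint G ** proj_perp F ** G"
    by (simp only: woodbury_sqrt_identity[OF MW S(2) invN invT])
  finally show ?thesis
    by (simp add: cadjoint_matrix_mult M_def W_def)
qed

theorem lemma3:
  fixes F G :: "complex^'k^'n" and Z Z' :: "complex^'k^'k"
  assumes "CARD('k) \<le> CARD('n)"
    and "rank F = CARD('k)"
    and "psd Z" and "psd Z'"
    and "loewner_le Z Z'"
  shows "loewner_le (h0 F G Z) (h0 F G Z')"
proof -
  define M where "M = cadjoint F ** F"
  define C where "C = cadjoint F ** G"
  \<comment> \<open>\<open>CARD('k) \<le> CARD('n)\<close> is implied by the rank condition and not needed\<close>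
  have F: "\<And>x. F *v x = 0 \<Longrightarrow> x = 0"
    using assms(2) full_column_rank_imp_injective by blast
  have "pd (M + Z)"
    unfolding M_def using pd_add_psd[OF pd_gram[OF F] assms(3)] .
  moreover have "loewner_le (M + Z) (M + Z')"
    using assms(5) by (simp add: loewner_le_def)
  ultimately have "loewner_le (matrix_inv (M + Z')) (matrix_inv (M + Z))"
    by (rule matrix_inv_antitone)
  then have "loewner_le (matrix_inv M - matrix_inv (M + Z)) (matrix_inv M - matrix_inv (M + Z'))"
    by (simp add: loewner_le_def)
  moreover have "h0 F G Y = cadjoint C ** (matrix_inv M - matrix_inv (M + Y)) ** C
      + cadjoint G ** proj_perp F ** G" if "psd Y" for Y
    unfolding M_def C_def using h0_eq_inverse_difference[OF F that] .
  ultimately show ?thesis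
    using assms(3,4) by (simp add: loewner_le_add_right loewner_le_congruence)
qed

end
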